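(* Consider a run of \texttt{SequOOL} with budget $n$ on $f$ with deterministic feedback, and let $h_{\max}=\lfloor n/\bar\log n\rfloor$. Let $x^\star$ be a global optimum of $f$ with associated $(\nu,\rho)$, let $C>1$, and write $d=d(\nu,C,\rho)$. For any depth $h\in[h_{\max}]$, if \[ \frac{h_{\max}}{h}\ \ge\ C\rho^{-d h}, \] then $\bot_h=h$, with the convention $\bot_0=0$.
   Context: Let $\mathcal X$ be a set and $f:\mathcal X\to\mathbb R$ a function attaining its supremum; a point $x^\star$ with $f(x^\star)=\sup_{x\in\mathcal X}f(x)$ is a global optimum. Hierarchical partitioning $\mathcal P=\{\mathcal P_{h,i}\}$: - for every depth $h\ge 0$, the cells $\{\mathcal P_{h,i}\}_{1\le i\le I_h}$ form a partition of $\mathcal X$, and $\mathcal P_{0,1}=\mathcal X$; - each cell $\mathcal P_{h,i}$ is partitioned into finitely many children cells of depth $h+1$; - each cell has a fixed representative point $x_{h,i}\in\mathcal P_{h,i}$, and we write $f_{h,i}=f(x_{h,i})$; - for a global optimum $x^\star$, $i^\star_h$ is the index of the unique depth-$h$ cell containing $x^\star$. Local smoothness: a global optimum $x^\star$ has associated $(\nu,\rho)$, with $\nu>0$ and $\rho\in(0,1)$, if for all $h\in\mathbb N$ and all $x\in\mathcal P_{h,i^\star_h}$ we have $f(x)\ge f(x^\star)-\nu\rho^h$. Near-optimality dimension: for $\nu>0$, $C>1$, $\rho\in(0,1)$, let $\mathcal N_h(\epsilon)$ be the number of depth-$h$ cells $\mathcal P_{h,i}$ with $\sup_{x\in\mathcal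 P_{h,i}}f(x)\ge f(x^\star)-\epsilon$. Define \[ d(\nu,C,\rho)=\inf\{d'\ge 0:\ \forall h\ge 0,\ \mathcal N_h(3\nu\rho^h)\le C\rho^{-d'h}\}, \] which is assumed finite. Notation: $\bar\log n=\sum_{t=1}^n 1/t$ (the $n$-th harmonic number), and $[a]=\{1,\dots,a\}$. Deterministic feedback: evaluating a cell $\mathcal P_{h,i}$ returns $f_{h,i}$ exactly. Opening a cell means evaluating each of its children cells once. \texttt{SequOOL} with budget $n$: set $h_{\max}=\lfloor n/\bar\log n\rfloor$ and open $\mathcal P_{0,1}$. Then, for $h=1,2,\dots,h_{\max}$ in increasing order, open the $\lfloor h_{\max}/h\rfloor$ depth-$h$ cells having the largest values $f_{h,j}$ among the evaluated depth-$h$ cells (or all of them if there are fewer). Finally, output $x(n)$, a representative point $x_{h,i}$ of an evaluated cell maximizing $f_{h,i}$. $\bot_h$ is the depth of the deepest opened cell containing $x^\star$ at the end of iteration $h$ of the loop. *)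

theory Defs
  imports "HOL-Analysis.Analysis"
begin

text \<open>Hierarchical partitioning: depth h has cells P h i, i in {1..I h};
  x h i is the representative point of cell (h,i).\<close>
definition hier_partition ::
  "(nat \<Rightarrow> nat) \<Rightarrow> (nat \<Rightarrow> nat \<Rightarrow> 'a set) \<Rightarrow> (nat \<Rightarrow> nat \<Rightarrow> 'a) \<Rightarrow> bool" where
  "hier_partition I P x \<longleftrightarrow>
     I 0 = 1 \<and> P 0 1 = UNIV \<and>
     (\<forall>h. (\<Union>i\<in>{1..I h}. P h i) = UNIV) \<and>
     (\<forall>h. \<forall>i\<in>{1..I h}. \<forall>j\<in>{1..I h}. i \<noteq> j \<longrightarrow> P h i \<inter> P h j = {}) \<and>
     (\<forall>h. \<forall>i\<in>{1..I h}. P h i \<noteq> {}) \<and>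
     (\<forall>h. \<forall>j\<in>{1..I (Suc h)}. \<exists>i\<in>{1..I h}. P (Suc h) j \<subseteq> P h i) \<and>
     (\<forall>h. \<forall>i\<in>{1..I h}.
        P h i = (\<Union>j\<in>{j\<in>{1..I (Suc h)}. P (Suc h) j \<subseteq> P h i}. P (Suc h) j)) \<and>
     (\<forall>h. \<forall>i\<in>{1..I h}. x h i \<in> P h i)"

definition children :: "(nat \<Rightarrow> nat) \<Rightarrow> (nat \<Rightarrow> nat \<Rightarrow> 'a set) \<Rightarrow> nat \<Rightarrow> nat \<Rightarrow> nat set" where
  "children I P h i = {j\<in>{1..I (Suc h)}. P (Suc h) j \<subseteq> P h i}"

definition evaluated :: "(nat \<Rightarrow> nat) \<Rightarrow> (nat \<Rightarrow> nat \<Rightarrow> 'a set) \<Rightarrow> (nat \<Rightarrow> nat set) \<Rightarrow> nat \<Rightarrow> nat set" where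
  "evaluated I P opened h =
     (if h = 0 then {1} else (\<Union>i\<in>opened (h - 1). children I P (h - 1) i))"

definition sequool_hmax :: "nat \<Rightarrow> nat" where
  "sequool_hmax n = nat \<lfloor>real n / (harm n :: real)\<rfloor>"

text \<open>opened h = set of indices of depth-h cells opened by a run of SequOOL with budget n
  (any tie-breaking among equal values is allowed).\<close>
definition sequool_run ::
  "('a \<Rightarrow> real) \<Rightarrow> (nat \<Rightarrow> nat) \<Rightarrow> (nat \<Rightarrow> nat \<Rightarrow> 'a set) \<Rightarrow> (nat \<Rightarrow> nat \<Rightarrow> 'a) \<Rightarrow> nat
     \<Rightarrow> (nat \<Rightarrow> nat set) \<Rightarrow> bool" where
  "sequool_run f I P x n opened \<longleftrightarrow>
     opened 0 = {1} \<and>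
     (\<forall>h\<in>{1..sequool_hmax n}.
        opened h \<subseteq> evaluated I P opened h \<and>
        card (opened h) = min (sequool_hmax n div h) (card (evaluated I P opened h)) \<and>
        (\<forall>i\<in>opened h. \<forall>j\<in>evaluated I P opened h - opened h. f (x h j) \<le> f (x h i))) \<and>
     (\<forall>h>sequool_hmax n. opened h = {})"

definition bot_depth :: "(nat \<Rightarrow> nat \<Rightarrow> 'a set) \<Rightarrow> (nat \<Rightarrow> nat set) \<Rightarrow> 'a \<Rightarrow> nat \<Rightarrow> nat" where
  "bot_depth P opened xstar h = Max {h'. h' \<le> h \<and> (\<exists>i\<in>opened h'. xstar \<in> P h' i)}"

definition local_smooth ::
  "('a \<Rightarrow> real) \<Rightarrow> (nat \<Rightarrow> nat) \<Rightarrow> (nat \<Rightarrow> nat \<Rightarrow> 'a set) \<Rightarrow> 'a \<Rightarrow> real \<Rightarrow> real \<Rightarrow> bool" where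
  "local_smooth f I P xstar \<nu> \<rho> \<longleftrightarrow>
     (\<forall>h. \<forall>i\<in>{1..I h}. xstar \<in> P h i \<longrightarrow> (\<forall>y\<in>P h i. f y \<ge> f xstar - \<nu> * \<rho> ^ h))"

definition N_cells ::
  "('a \<Rightarrow> real) \<Rightarrow> (nat \<Rightarrow> nat) \<Rightarrow> (nat \<Rightarrow> nat \<Rightarrow> 'a set) \<Rightarrow> 'a \<Rightarrow> nat \<Rightarrow> real \<Rightarrow> nat" where
  "N_cells f I P xstar h \<epsilon> = card {i\<in>{1..I h}. (SUP y\<in>P h i. f y) \<ge> f xstar - \<epsilon>}"

definition near_opt_set ::
  "('a \<Rightarrow> real) \<Rightarrow> (nat \<Rightarrow> nat) \<Rightarrow> (nat \<Rightarrow> nat \<Rightarrow> 'a set) \<Rightarrow> 'a \<Rightarrow> real \<Rightarrow> real \<Rightarrow> real \<Rightarrow> real set" where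
  "near_opt_set f I P xstar \<nu> C \<rho> =
     {d'. d' \<ge> 0 \<and> (\<forall>h. real (N_cells f I P xstar h (3 * \<nu> * \<rho> ^ h)) \<le> C * \<rho> powr (- d' * real h))}"

definition near_opt_dim ::
  "('a \<Rightarrow> real) \<Rightarrow> (nat \<Rightarrow> nat) \<Rightarrow> (nat \<Rightarrow> nat \<Rightarrow> 'a set) \<Rightarrow> 'a \<Rightarrow> real \<Rightarrow> real \<Rightarrow> real \<Rightarrow> real" where
  "near_opt_dim f I P xstar \<nu> C \<rho> = Inf (near_opt_set f I P xstar \<nu> C \<rho>)"

end

theory Submission
  imports Defs
begin

text \<open>If at some depth \<open>k\<close> the cell containing \<open>x\<^sup>\<star>\<close> is evaluated but not opened, then
  \<open>SequOOL\<close> opened \<open>\<lfloor>h\<^sub>m\<^sub>a\<^sub>x/k\<rfloor>\<close> cells whose values beat it; together with it these are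
  \<open>\<lfloor>h\<^sub>m\<^sub>a\<^sub>x/k\<rfloor> + 1\<close> cells that are \<open>3\<nu>\<rho>\<^sup>k\<close>-near-optimal, as local smoothness makes the optimal
  cell \<open>\<nu>\<rho>\<^sup>k\<close>-near-optimal. The hypothesis bounds their number by \<open>C\<rho>\<^sup>-\<^sup>d\<^sup>k \<le> h\<^sub>m\<^sub>a\<^sub>x/k\<close>,
  a contradiction; hence by induction the optimal cell is opened at every depth up to \<open>h\<close>.\<close>

lemma near_opt_dim_nonneg:
  assumes "near_opt_set f I P xstar \<nu> C \<rho> \<noteq> {}"
  shows "near_opt_dim f I P xstar \<nu> C \<rho> \<ge> 0"
  unfolding near_opt_dim_def using assms
  by (intro cInf_greatest) (auto simp: near_opt_set_def)

text \<open>The infimum defining \<open>d\<close> is attained, since the bound at each depth is a closed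
  condition on the exponent.\<close>

lemma N_cells_le_near_opt_dim:
  assumes "near_opt_set f I P xstar \<nu> C \<rho> \<noteq> {}" and "0 < \<rho>"
  shows "real (N_cells f I P xstar h (3 * \<nu> * \<rho> ^ h))
           \<le> C * \<rho> powr (- near_opt_dim f I P xstar \<nu> C \<rho> * real h)"
proof -
  let ?S = "near_opt_set f I P xstar \<nu> C \<rho>"
  let ?T = "{d'. real (N_cells f I P xstar h (3 * \<nu> * \<rho> ^ h)) \<le> C * \<rho> powr (- d' * real h)}"
  have "closed ?T"
    by (intro closed_Collect_le continuous_intros) (use assms(2) in auto)
  moreover have "?S \<subseteq> ?T" and "bdd_below ?S"
    unfolding near_opt_set_def by (auto intro: bdd_belowI[of _ 0])
  ultimately have "Inf ?S \<in> ?T"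
    using closed_subset_contains_Inf[of ?T ?S] assms(1) by blast
  then show ?thesis unfolding near_opt_dim_def by simp
qed

lemma hier_partition_cell_containing:
  assumes "hier_partition I P x"
  obtains i where "i \<in> {1..I h}" and "y \<in> P h i"
proof -
  have "y \<in> (\<Union>i\<in>{1..I h}. P h i)" using assms by (simp add: hier_partition_def)
  then show ?thesis using that by blast
qed

lemma hier_partition_child_containing:
  assumes "hier_partition I P x"
    and "i \<in> {1..I h}" "y \<in> P h i" and "j \<in> {1..I (Suc h)}" "y \<in> P (Suc h) j"
  shows "j \<in> children I P h i"
proof -
  have parent: "\<exists>i'\<in>{1..I h}. P (Suc h) j \<subseteq> P h i'"
    and disjoint: "\<forall>i'\<in>{1..I h}. i' \<noteq> i \<longrightarrow> P h i' \<inter> P h i = {}"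
    using assms(1,2,4) unfolding hier_partition_def by auto
  then obtain i' where "i' \<in> {1..I h}" "P (Suc h) j \<subseteq> P h i'" by blast
  moreover have "i' = i" using calculation disjoint assms(3,5) by blast
  ultimately show ?thesis using assms(4) by (simp add: children_def)
qed

lemma evaluated_subset:
  assumes "hier_partition I P x"
  shows "evaluated I P opened h \<subseteq> {1..I h}"
  using assms by (auto simp: hier_partition_def evaluated_def children_def)

lemma sequool_opened_subset:
  assumes "hier_partition I P x" and "sequool_run f I P x n opened"
  shows "opened h \<subseteq> {1..I h}"
proof (cases "h = 0 \<or> h > sequool_hmax n")
  case True
  then show ?thesis using assms by (auto simp: sequool_run_def hier_partition_def)
next
  case False
  then have "opened h \<subseteq> evaluated I P opened h"
    using assms(2) unfolding sequool_run_def by auto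
  then show ?thesis using evaluated_subset[OF assms(1)] by blast
qed

lemma cell_sup_ge_representative:
  fixes f :: "'a \<Rightarrow> real"
  assumes "hier_partition I P x" and "\<forall>y. f y \<le> f xstar" and "i \<in> {1..I h}"
  shows "f (x h i) \<le> (SUP y\<in>P h i. f y)"
proof -
  have "x h i \<in> P h i" using assms(1,3) by (simp add: hier_partition_def)
  moreover have "bdd_above (f ` P h i)" using assms(2) by (auto intro: bdd_aboveI)
  ultimately show ?thesis by (intro cSUP_upper)
qed

lemma sequool_skipped_cell_bound:
  assumes part: "hier_partition I P x" and fmax: "\<forall>y. f y \<le> f xstar"
    and run: "sequool_run f I P x n opened" and k: "k \<in> {1..sequool_hmax n}"
    and skipped: "j \<in> evaluated I P opened k - opened k"
    and near: "f (x k j) \<ge> f xstar - \<epsilon>"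
  shows "sequool_hmax n div k < N_cells f I P xstar k \<epsilon>"
proof -
  let ?E = "evaluated I P opened k" and ?O = "opened k"
  let ?A = "{i\<in>{1..I k}. (SUP y\<in>P k i. f y) \<ge> f xstar - \<epsilon>}"
  have sub: "?O \<subseteq> ?E"
    and card: "card ?O = min (sequool_hmax n div k) (card ?E)"
    and greedy: "\<forall>i\<in>?O. f (x k j) \<le> f (x k i)"
    using run k skipped unfolding sequool_run_def by auto
  have finE: "finite ?E" using evaluated_subset[OF part] finite_subset by blast
  have "?O \<noteq> ?E" using skipped by blast
  then have "card ?O < card ?E" using finE sub by (simp add: psubset_card_mono)
  then have cardO: "card ?O = sequool_hmax n div k" using card by linarith
  have "\<forall>i\<in>insert j ?O. f (x k i) \<ge> f xstar - \<epsilon>" using near greedy by force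
  moreover have "insert j ?O \<subseteq> {1..I k}"
    using skipped sub evaluated_subset[OF part] by blast
  ultimately have "insert j ?O \<subseteq> ?A"
    using cell_sup_ge_representative[OF part fmax] by fastforce
  then have "card (insert j ?O) \<le> card ?A" by (intro card_mono) simp_all
  moreover have "card (insert j ?O) = card ?O + 1"
    using skipped finite_subset[OF sub finE] by simp
  ultimately show ?thesis using cardO unfolding N_cells_def by simp
qed

lemma sequool_opens_optimal_path:
  assumes part: "hier_partition I P x" and fmax: "\<forall>y. f y \<le> f xstar"
    and "\<nu> > 0" and "0 < \<rho>" and smooth: "local_smooth f I P xstar \<nu> \<rho>"
    and run: "sequool_run f I P x n opened" and "h \<le> sequool_hmax n"
    and few: "\<forall>k\<in>{1..h}. N_cells f I P xstar k (3 * \<nu> * \<rho> ^ k) \<le> sequool_hmax n div k"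
    and "k \<le> h"
  shows "\<exists>i\<in>opened k. xstar \<in> P k i"
  using \<open>k \<le> h\<close>
proof (induction k)
  case 0
  then show ?case using run part by (simp add: sequool_run_def hier_partition_def)
next
  case (Suc k)
  then obtain i where i: "i \<in> opened k" "xstar \<in> P k i" by auto
  obtain j where j: "j \<in> {1..I (Suc k)}" "xstar \<in> P (Suc k) j"
    using hier_partition_cell_containing[OF part] by blast
  have "i \<in> {1..I k}" using i sequool_opened_subset[OF part run] by blast
  then have "j \<in> children I P k i"
    using i j by (intro hier_partition_child_containing[OF part])
  then have "j \<in> evaluated I P opened (Suc k)"
    using i by (auto simp: evaluated_def)
  moreover have "f (x (Suc k) j) \<ge> f xstar - 3 * \<nu> * \<rho> ^ Suc k"
  proof -
    have "x (Suc k) j \<in> P (Suc k) j" using part j(1) by (simp add: hier_partition_def)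
    then have "f (x (Suc k) j) \<ge> f xstar - \<nu> * \<rho> ^ Suc k"
      using smooth j unfolding local_smooth_def by blast
    moreover have "\<nu> * \<rho> ^ Suc k \<ge> 0" using \<open>\<nu> > 0\<close> \<open>0 < \<rho>\<close> by simp
    ultimately show ?thesis by linarith
  qed
  moreover have "Suc k \<in> {1..sequool_hmax n}" using Suc.prems \<open>h \<le> sequool_hmax n\<close> by simp
  moreover have "N_cells f I P xstar (Suc k) (3 * \<nu> * \<rho> ^ Suc k) \<le> sequool_hmax n div Suc k"
    using Suc.prems by (intro few[rule_format]) simp
  ultimately have "j \<in> opened (Suc k)"
    using sequool_skipped_cell_bound[OF part fmax run] by (meson DiffI leD)
  with j show ?case by blast
qed

lemma bot_depth_eq_if_optimal_path_opened:
  assumes "\<forall>k\<le>h. \<exists>i\<in>opened k. xstar \<in> P k i"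
  shows "bot_depth P opened xstar h = h"
proof -
  have "{h'. h' \<le> h \<and> (\<exists>i\<in>opened h'. xstar \<in> P h' i)} = {..h}" using assms by auto
  then show ?thesis unfolding bot_depth_def by (auto intro!: Max_eqI)
qed

lemma real_le_divide_imp_le_div:
  fixes m k N :: nat
  assumes "k > 0" and "real N \<le> real m / real k"
  shows "N \<le> m div k"
proof -
  have "real (N * k) \<le> real m" using assms by (simp add: pos_le_divide_eq)
  then have "N * k \<le> m" by (simp only: of_nat_le_iff)
  then show ?thesis using assms(1) by (simp add: less_eq_div_iff_mult_less_eq)
qed

theorem lemma1:
  fixes f :: "'a \<Rightarrow> real" and I :: "nat \<Rightarrow> nat" and P :: "nat \<Rightarrow> nat \<Rightarrow> 'a set"
    and x :: "nat \<Rightarrow> nat \<Rightarrow> 'a" and n :: nat and opened :: "nat \<Rightarrow> nat set"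
    and xstar :: 'a and \<nu> \<rho> C :: real and h :: nat
  assumes "hier_partition I P x"
    and "\<forall>y. f y \<le> f xstar"
    and "\<nu> > 0" and "0 < \<rho>" and "\<rho> < 1"
    and "local_smooth f I P xstar \<nu> \<rho>"
    and "C > 1"
    and "near_opt_set f I P xstar \<nu> C \<rho> \<noteq> {}"
    and "sequool_run f I P x n opened"
    and "h \<in> {1..sequool_hmax n}"
    and "real (sequool_hmax n) / real h \<ge> C * \<rho> powr (- near_opt_dim f I P xstar \<nu> C \<rho> * real h)"
  shows "bot_depth P opened xstar h = h"
proof -
  define d where "d = near_opt_dim f I P xstar \<nu> C \<rho>"
  define H where "H = sequool_hmax n"
  have "N_cells f I P xstar k (3 * \<nu> * \<rho> ^ k) \<le> H div k" if k: "k \<in> {1..h}" for k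
  proof (rule real_le_divide_imp_le_div)
    have "- d * real h \<le> - d * real k"
      using near_opt_dim_nonneg[OF assms(8)] k by (simp add: d_def mult_left_mono)
    then have "\<rho> powr (- d * real k) \<le> \<rho> powr (- d * real h)"
      using assms(4,5) by (simp add: powr_mono')
    then have "C * \<rho> powr (- d * real k) \<le> C * \<rho> powr (- d * real h)"
      using assms(7) by (intro mult_left_mono) auto
    then have "real (N_cells f I P xstar k (3 * \<nu> * \<rho> ^ k)) \<le> C * \<rho> powr (- d * real h)"
      using N_cells_le_near_opt_dim[OF assms(8,4), of k] unfolding d_def by linarith
    also have "\<dots> \<le> real H / real h" using assms(11) unfolding H_def d_def .
    also have "\<dots> \<le> real H / real k" using k by (simp add: frac_le)
    finally show "real (N_cells f I P xstar k (3 * \<nu> * \<rho> ^ k)) \<le> real H / real k" .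
  qed (use k in simp)
  then show ?thesis
    using sequool_opens_optimal_path[OF assms(1-4,6,9)] assms(10)
    by (intro bot_depth_eq_if_optimal_path_opened) (auto simp: H_def)
qed

end
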